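(* Let $n\ge2$ and let $A[0],\dots,A[n-1]$ be integers with $0=A[0]<A[1]<\cdots<A[n-1]=M$, and assume $2A[i]\le A[2i]$ for all $i$ with $2i\le n-1$. Let $D=Mn+1$. Consider the $0/1$-Knapsack instance with capacity $2n-1$ and the following items (weight, value): for $i=1,\dots,n-1$, an item $(i,\,2A[i])$; for each $i\in\{0,\dots,n-1\}\setminus\{1\}$, an item $(2n-1-i,\,2(D-A[i]))$; and an item $(2n-2,\,2(D-A[1])+1)$. Then the optimal value of this instance is odd if and only if $A$ is super-additive, i.e. $A[i]+A[j]\le A[i+j]$ for all $i,j\ge0$ with $i+j\le n-1$.
   Context: $0/1$-Knapsack: given items $(w_i,v_i)$ and capacity $t$, the optimal value is $\max\sum_{i\in I}v_i$ over subsets $I$ of items with $\sum_{i\in I}w_i\le t$ (each item used at most once). *)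

theory Defs
  imports Main
begin

text \<open>0/1-Knapsack: items are (weight, value) pairs in a list (index = item identity,
so duplicate pairs are distinct items); the optimal value is the maximum total value
over subsets of item indices whose total weight is at most the capacity.\<close>
definition knapsack_opt :: "(nat \<times> int) list \<Rightarrow> nat \<Rightarrow> int" where
  "knapsack_opt items t =
     Max {(\<Sum>i\<in>I. snd (items ! i)) | I. I \<subseteq> {..<length items} \<and> (\<Sum>i\<in>I. fst (items ! i)) \<le> t}"

definition super_additive :: "nat \<Rightarrow> (nat \<Rightarrow> int) \<Rightarrow> bool" where
  "super_additive n A \<longleftrightarrow> (\<forall>i j. i + j \<le> n - 1 \<longrightarrow> A i + A j \<le> A (i + j))"

definition reduction_items :: "nat \<Rightarrow> (nat \<Rightarrow> int) \<Rightarrow> (nat \<times> int) list" where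
  "reduction_items n A =
    (let M = A (n - 1); D = M * int n + 1 in
       [(i, 2 * A i). i \<leftarrow> [1..<n]]
     @ [(2 * n - 1 - i, 2 * (D - A i)). i \<leftarrow> filter (\<lambda>i. i \<noteq> 1) [0..<n]]
     @ [(2 * n - 2, 2 * (D - A 1) + 1)])"

end

theory Submission imports Defs begin

text \<open>Write D = M n + 1. All items have even value except the heavy item of weight 2n - 2,
whose value 2(D - A[1]) + 1 is odd. Heavy items weigh at least n, so a feasible set contains at
most one of them; if it is the one of weight 2n - 1 - k (parameter k), the light items beside it
have total weight at most k and the set is worth 2 \<Sum> A + 2(D - A[k]) + [k = 1], while sets
of light items alone are worth less than 2D. An odd value forces k = 1 and is then at most 2D +
1, and under super-additivity every value is at most 2D + 1; as 2D + 1 is attained by light item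
1 plus the heavy item of parameter 1, super-additivity makes the optimum odd. Conversely, a
violation A[i + j] < A[i] + A[j] has i \<noteq> j by the doubling hypothesis, so light items i,
j together with the heavy item of parameter i + j form a feasible set of value at least 2D + 2,
above every odd feasible value.\<close>

definition knapsack_weight :: "(nat \<times> int) list \<Rightarrow> nat set \<Rightarrow> nat" where
  "knapsack_weight items I = (\<Sum>i\<in>I. fst (items ! i))"

definition knapsack_value :: "(nat \<times> int) list \<Rightarrow> nat set \<Rightarrow> int" where
  "knapsack_value items I = (\<Sum>i\<in>I. snd (items ! i))"

lemma knapsack_opt_eq_Max:
  "knapsack_opt items t =
     Max (knapsack_value items ` {I. I \<subseteq> {..<length items} \<and> knapsack_weight items I \<le> t})"
  unfolding knapsack_opt_def knapsack_value_def knapsack_weight_def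
  by (rule arg_cong[where f = Max]) auto

lemma finite_knapsack_values:
  "finite (knapsack_value items ` {I. I \<subseteq> {..<length items} \<and> knapsack_weight items I \<le> t})"
  by (rule finite_imageI, rule finite_subset[of _ "Pow {..<length items}"]) auto

lemma knapsack_opt_ge:
  assumes "I \<subseteq> {..<length items}" and "knapsack_weight items I \<le> t"
  shows "knapsack_value items I \<le> knapsack_opt items t"
  unfolding knapsack_opt_eq_Max using assms by (intro Max_ge[OF finite_knapsack_values]) auto

lemma knapsack_opt_attained:
  obtains I where "I \<subseteq> {..<length items}" and "knapsack_weight items I \<le> t"
    and "knapsack_opt items t = knapsack_value items I"
proof -
  have "{} \<in> {I. I \<subseteq> {..<length items} \<and> knapsack_weight items I \<le> t}"
    by (simp add: knapsack_weight_def)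
  then have "knapsack_opt items t
      \<in> knapsack_value items ` {I. I \<subseteq> {..<length items} \<and> knapsack_weight items I \<le> t}"
    unfolding knapsack_opt_eq_Max by (intro Max_in[OF finite_knapsack_values]) auto
  then show thesis using that by blast
qed

lemma super_additive_le:
  "super_additive n A \<Longrightarrow> m \<le> n \<Longrightarrow> super_additive m A"
  unfolding super_additive_def by simp

lemma super_additive_two: "A 0 = 0 \<Longrightarrow> super_additive 2 A"
  unfolding super_additive_def by (auto simp: le_Suc_eq add_is_1)

lemma super_additive_sum:
  fixes A :: "nat \<Rightarrow> int"
  assumes "super_additive n A" and "A 0 = 0" and "finite S" and "(\<Sum>p\<in>S. f p) \<le> n - 1"
  shows "(\<Sum>p\<in>S. A (f p)) \<le> A (\<Sum>p\<in>S. f p)"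
  using assms(3,4)
proof (induction S rule: finite_induct)
  case empty
  then show ?case using assms(2) by simp
next
  case (insert x F)
  then have "(\<Sum>p\<in>insert x F. A (f p)) \<le> A (f x) + A (\<Sum>p\<in>F. f p)"
    by simp
  also have "\<dots> \<le> A (f x + (\<Sum>p\<in>F. f p))"
    using assms(1) insert unfolding super_additive_def by simp
  finally show ?case using insert by simp
qed

definition heavy_item :: "nat \<Rightarrow> (nat \<Rightarrow> int) \<Rightarrow> nat \<Rightarrow> nat \<times> int" where
  "heavy_item n A k = (2 * n - 1 - k, 2 * (A (n - 1) * int n + 1 - A k) + of_bool (k = 1))"

definition heavy_parameters :: "nat \<Rightarrow> nat list" where
  "heavy_parameters n = 0 # [2..<n] @ [1]"

lemma reduction_items_eq:
  assumes "n \<ge> 2"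
  shows "reduction_items n A =
    map (\<lambda>i. (i, 2 * A i)) [1..<n] @ map (heavy_item n A) (heavy_parameters n)"
proof -
  have "[0..<n] = 0 # 1 # [2..<n]"
    using assms by (simp add: upt_conv_Cons numeral_2_eq_2)
  then have "filter (\<lambda>i. i \<noteq> 1) [0..<n] = 0 # [2..<n]"
    by (simp add: filter_id_conv)
  moreover have "map (heavy_item n A) [2..<n] =
      map (\<lambda>i. (2 * n - 1 - i, 2 * (A (n - 1) * int n + 1 - A i))) [2..<n]"
    by (simp add: heavy_item_def)
  ultimately show ?thesis
    by (simp add: reduction_items_def heavy_item_def heavy_parameters_def Let_def)
qed

lemma length_heavy_parameters [simp]: "n \<ge> 2 \<Longrightarrow> length (heavy_parameters n) = n"
  by (simp add: heavy_parameters_def)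

lemma set_heavy_parameters: "n \<ge> 2 \<Longrightarrow> set (heavy_parameters n) = {..<n}"
  by (auto simp: heavy_parameters_def)

lemma length_reduction_items: "n \<ge> 2 \<Longrightarrow> length (reduction_items n A) = 2 * n - 1"
  by (simp add: reduction_items_eq)

lemma reduction_items_light:
  "n \<ge> 2 \<Longrightarrow> p < n - 1 \<Longrightarrow> reduction_items n A ! p = (p + 1, 2 * A (p + 1))"
  by (simp add: reduction_items_eq nth_append)

lemma reduction_items_nth_heavy:
  "n \<ge> 2 \<Longrightarrow> n - 1 \<le> b \<Longrightarrow> b < 2 * n - 1 \<Longrightarrow>
    reduction_items n A ! b = heavy_item n A (heavy_parameters n ! (b - (n - 1)))"
  by (simp add: reduction_items_eq nth_append)

lemma reduction_items_heavy:
  assumes "n \<ge> 2" and "n - 1 \<le> b" and "b < 2 * n - 1"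
  obtains k where "k < n" and "reduction_items n A ! b = heavy_item n A k"
proof
  show "heavy_parameters n ! (b - (n - 1)) < n"
    using nth_mem[of "b - (n - 1)" "heavy_parameters n"] set_heavy_parameters[OF assms(1)] assms
    by auto
qed (use assms reduction_items_nth_heavy in blast)

lemma reduction_items_heavy_index:
  assumes "n \<ge> 2" and "k < n"
  obtains b where "n - 1 \<le> b" and "b < 2 * n - 1" and "reduction_items n A ! b = heavy_item n A k"
proof -
  obtain q where q: "q < n" "heavy_parameters n ! q = k"
    using assms set_heavy_parameters[OF assms(1)]
    by (metis in_set_conv_nth lessThan_iff length_heavy_parameters)
  then have "reduction_items n A ! (n - 1 + q) = heavy_item n A k"
    using reduction_items_nth_heavy[OF assms(1), of "n - 1 + q"] assms by simp
  then show thesis using that[of "n - 1 + q"] q assms by simp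
qed

lemma reduction_light_set:
  assumes "n \<ge> 2" and "S \<subseteq> {..<n - 1}"
  shows "knapsack_weight (reduction_items n A) S = (\<Sum>p\<in>S. p + 1)"
    and "knapsack_value (reduction_items n A) S = 2 * (\<Sum>p\<in>S. A (p + 1))"
  using assms by (auto simp: knapsack_weight_def knapsack_value_def sum_distrib_left
      reduction_items_light intro!: sum.cong)

lemma reduction_heavy_index_unique:
  assumes "n \<ge> 2" and "I \<subseteq> {..<2 * n - 1}"
    and "knapsack_weight (reduction_items n A) I \<le> 2 * n - 1"
    and "b \<in> I" "b' \<in> I" "n - 1 \<le> b" "n - 1 \<le> b'"
  shows "b = b'"
proof (rule ccontr)
  assume "b \<noteq> b'"
  have heavy: "n \<le> fst (reduction_items n A ! c)" if "c \<in> {b, b'}" for c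
  proof -
    have "n - 1 \<le> c" "c < 2 * n - 1" using that assms(2,4-7) by auto
    then obtain k where "k < n" "reduction_items n A ! c = heavy_item n A k"
      by (rule reduction_items_heavy[OF assms(1)])
    then show ?thesis by (simp add: heavy_item_def)
  qed
  have "2 * n \<le> knapsack_weight (reduction_items n A) {b, b'}"
    using heavy[of b] heavy[of b'] \<open>b \<noteq> b'\<close> by (simp add: knapsack_weight_def)
  also have "\<dots> \<le> knapsack_weight (reduction_items n A) I"
    unfolding knapsack_weight_def
    using assms(2,4,5) by (intro sum_mono2) (auto intro: finite_subset)
  finally show False using assms(1,3) by linarith
qed

lemma sum_le_card_mult_max:
  fixes A :: "nat \<Rightarrow> int"
  assumes "A 0 = 0" and "\<And>i j. i \<le> j \<Longrightarrow> j \<le> n - 1 \<Longrightarrow> A i \<le> A j"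
    and "S \<subseteq> {..<n - 1}"
  shows "(\<Sum>p\<in>S. A (p + 1)) \<le> int (n - 1) * A (n - 1)"
proof -
  have "0 \<le> A (p + 1)" if "p < n - 1" for p
    using assms(1) assms(2)[of 0 "p + 1"] that by simp
  then have "(\<Sum>p\<in>S. A (p + 1)) \<le> (\<Sum>p\<in>{..<n - 1}. A (p + 1))"
    using assms(3) by (intro sum_mono2) auto
  also have "\<dots> \<le> (\<Sum>p\<in>{..<n - 1}. A (n - 1))"
    using assms(2) by (intro sum_mono) auto
  finally show ?thesis by simp
qed

lemma reduction_feasible_value_le:
  fixes A :: "nat \<Rightarrow> int"
  assumes n: "n \<ge> 2" and A0: "A 0 = 0"
    and mono: "\<And>i j. i \<le> j \<Longrightarrow> j \<le> n - 1 \<Longrightarrow> A i \<le> A j"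
    and I: "I \<subseteq> {..<2 * n - 1}" and weight: "knapsack_weight (reduction_items n A) I \<le> 2 * n - 1"
    and odd_or_sa: "odd (knapsack_value (reduction_items n A) I) \<or> super_additive n A"
  shows "knapsack_value (reduction_items n A) I \<le> 2 * (A (n - 1) * int n + 1) + 1"
proof (cases "I \<subseteq> {..<n - 1}")
  case True
  have "0 \<le> A (n - 1)" using A0 mono[of 0 "n - 1"] by simp
  have "knapsack_value (reduction_items n A) I = 2 * (\<Sum>p\<in>I. A (p + 1))"
    using reduction_light_set(2)[OF n True] .
  also have "\<dots> \<le> 2 * (int (n - 1) * A (n - 1))"
    using sum_le_card_mult_max A0 mono True by simp
  also have "\<dots> \<le> 2 * (int n * A (n - 1))"
    using \<open>0 \<le> A (n - 1)\<close> by (simp add: mult_right_mono)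
  finally show ?thesis by (simp add: mult.commute)
next
  case False
  then obtain b where b: "b \<in> I" "n - 1 \<le> b" by (auto simp: subset_eq not_less)
  define S where "S = I - {b}"
  have S: "S \<subseteq> {..<n - 1}"
    using reduction_heavy_index_unique[OF n I weight b(1) _ b(2)] unfolding S_def by force
  have I_eq: "I = insert b S" and "b \<notin> S" and "finite S"
    using b(1) finite_subset[OF S] unfolding S_def by auto
  obtain k where k: "k < n" "reduction_items n A ! b = heavy_item n A k"
    using reduction_items_heavy[OF n b(2)] b(1) I by blast
  have "knapsack_weight (reduction_items n A) I = (2 * n - 1 - k) + (\<Sum>p\<in>S. p + 1)"
    using \<open>b \<notin> S\<close> \<open>finite S\<close> k reduction_light_set(1)[OF n S]
    unfolding I_eq knapsack_weight_def by (simp add: heavy_item_def)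
  then have weight_S: "(\<Sum>p\<in>S. p + 1) \<le> k"
    using weight k(1) by linarith
  have value_I: "knapsack_value (reduction_items n A) I =
      2 * (\<Sum>p\<in>S. A (p + 1)) + 2 * (A (n - 1) * int n + 1 - A k) + of_bool (k = 1)"
    using \<open>b \<notin> S\<close> \<open>finite S\<close> k reduction_light_set(2)[OF n S]
    unfolding I_eq knapsack_value_def by (simp add: heavy_item_def)
  \<comment> \<open>for k = 1 super-additivity below weight k + 1 holds automatically\<close>
  have "super_additive (k + 1) A"
  proof (cases "k = 1")
    case True
    then show ?thesis using super_additive_two[of A, OF A0] by (simp add: numeral_2_eq_2)
  next
    case False
    then have "super_additive n A" using odd_or_sa value_I by simp
    then show ?thesis using super_additive_le k(1) by simp
  qed
  then have "(\<Sum>p\<in>S. A (p + 1)) \<le> A (\<Sum>p\<in>S. p + 1)"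
    using super_additive_sum[of "k + 1" A, OF _ A0 \<open>finite S\<close>] weight_S by simp
  also have "\<dots> \<le> A k"
    using mono weight_S k(1) by simp
  finally show ?thesis using value_I by (cases "k = 1") simp_all
qed

lemma reduction_odd_witness:
  assumes n: "n \<ge> 2"
  obtains I where "I \<subseteq> {..<2 * n - 1}" and "knapsack_weight (reduction_items n A) I \<le> 2 * n - 1"
    and "knapsack_value (reduction_items n A) I = 2 * (A (n - 1) * int n + 1) + 1"
proof -
  have "1 < n" using n by simp
  then obtain b where b: "n - 1 \<le> b" "b < 2 * n - 1" "reduction_items n A ! b = heavy_item n A 1"
    by (rule reduction_items_heavy_index[OF n])
  have "0 \<noteq> b" and "reduction_items n A ! 0 = (1, 2 * A 1)"
    using b(1) n reduction_items_light[OF n, of 0] by auto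
  then show thesis
    using that[of "{0, b}"] b n
    by (simp add: knapsack_weight_def knapsack_value_def heavy_item_def)
qed

lemma reduction_violation_witness:
  assumes n: "n \<ge> 2" and "0 < i" "0 < j" "i \<noteq> j" "i + j \<le> n - 1"
  obtains I where "I \<subseteq> {..<2 * n - 1}" and "knapsack_weight (reduction_items n A) I \<le> 2 * n - 1"
    and "knapsack_value (reduction_items n A) I =
      2 * A i + 2 * A j + 2 * (A (n - 1) * int n + 1 - A (i + j))"
proof -
  have "i + j < n" using assms(5) n by linarith
  then obtain b where b: "n - 1 \<le> b" "b < 2 * n - 1" "reduction_items n A ! b = heavy_item n A (i + j)"
    by (rule reduction_items_heavy_index[OF n])
  have i: "reduction_items n A ! (i - 1) = (i, 2 * A i)"
    using reduction_items_light[OF n, of "i - 1"] assms by simp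
  have j: "reduction_items n A ! (j - 1) = (j, 2 * A j)"
    using reduction_items_light[OF n, of "j - 1"] assms by simp
  have distinct: "i - 1 \<noteq> j - 1" "i - 1 \<noteq> b" "j - 1 \<noteq> b" and "i + j \<noteq> 1"
    using assms b(1) by auto
  show thesis
  proof
    show "{i - 1, j - 1, b} \<subseteq> {..<2 * n - 1}" using assms b(2) by auto
    show "knapsack_weight (reduction_items n A) {i - 1, j - 1, b} \<le> 2 * n - 1"
      using distinct i j b(3) assms(5) by (simp add: knapsack_weight_def heavy_item_def)
    show "knapsack_value (reduction_items n A) {i - 1, j - 1, b} =
        2 * A i + 2 * A j + 2 * (A (n - 1) * int n + 1 - A (i + j))"
      using distinct i j b(3) by (simp add: knapsack_value_def heavy_item_def)
  qed
qed

lemma not_super_additive_witness: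
  fixes A :: "nat \<Rightarrow> int"
  assumes A0: "A 0 = 0" and doubling: "\<And>i. 2 * i \<le> n - 1 \<Longrightarrow> 2 * A i \<le> A (2 * i)"
    and "\<not> super_additive n A"
  obtains i j where "0 < i" "0 < j" "i \<noteq> j" "i + j \<le> n - 1" "A (i + j) < A i + A j"
proof -
  obtain i j where ij: "i + j \<le> n - 1" "A (i + j) < A i + A j"
    using assms(3) unfolding super_additive_def by force
  have "0 < i"
  proof (rule ccontr)
    assume "\<not> 0 < i"
    then show False using ij(2) A0 by simp
  qed
  have "0 < j"
  proof (rule ccontr)
    assume "\<not> 0 < j"
    then show False using ij(2) A0 by simp
  qed
  have "i \<noteq> j"
  proof
    assume "i = j"
    then have "i + j = 2 * i" by simp
    then have "2 * A i \<le> A (i + j)"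
      using ij(1) doubling[of i] by metis
    then show False using ij(2) \<open>i = j\<close> by simp
  qed
  show thesis by (rule that) fact+
qed

lemma reduction_opt_super_additive:
  fixes A :: "nat \<Rightarrow> int"
  assumes n: "n \<ge> 2" and A0: "A 0 = 0"
    and mono: "\<And>i j. i \<le> j \<Longrightarrow> j \<le> n - 1 \<Longrightarrow> A i \<le> A j"
    and "super_additive n A"
  shows "knapsack_opt (reduction_items n A) (2 * n - 1) = 2 * (A (n - 1) * int n + 1) + 1"
proof (rule antisym)
  obtain I where "I \<subseteq> {..<2 * n - 1}" "knapsack_weight (reduction_items n A) I \<le> 2 * n - 1"
    and "knapsack_opt (reduction_items n A) (2 * n - 1) = knapsack_value (reduction_items n A) I"
    using knapsack_opt_attained length_reduction_items[OF n] by metis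
  then show "knapsack_opt (reduction_items n A) (2 * n - 1) \<le> 2 * (A (n - 1) * int n + 1) + 1"
    using reduction_feasible_value_le[where n = n and A = A, OF n A0 mono] \<open>super_additive n A\<close> by simp
  obtain J where "J \<subseteq> {..<2 * n - 1}" "knapsack_weight (reduction_items n A) J \<le> 2 * n - 1"
    and "knapsack_value (reduction_items n A) J = 2 * (A (n - 1) * int n + 1) + 1"
    by (rule reduction_odd_witness[OF n])
  then show "2 * (A (n - 1) * int n + 1) + 1 \<le> knapsack_opt (reduction_items n A) (2 * n - 1)"
    using knapsack_opt_ge[of J "reduction_items n A"] length_reduction_items[OF n] by simp
qed

lemma reduction_opt_not_super_additive:
  fixes A :: "nat \<Rightarrow> int"
  assumes n: "n \<ge> 2" and A0: "A 0 = 0"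
    and mono: "\<And>i j. i \<le> j \<Longrightarrow> j \<le> n - 1 \<Longrightarrow> A i \<le> A j"
    and doubling: "\<And>i. 2 * i \<le> n - 1 \<Longrightarrow> 2 * A i \<le> A (2 * i)"
    and "\<not> super_additive n A"
  shows "even (knapsack_opt (reduction_items n A) (2 * n - 1))"
proof (rule ccontr)
  let ?opt = "knapsack_opt (reduction_items n A) (2 * n - 1)"
  assume odd_opt: "odd ?opt"
  obtain i j where ij: "0 < i" "0 < j" "i \<noteq> j" "i + j \<le> n - 1" "A (i + j) < A i + A j"
    using not_super_additive_witness[OF A0 doubling \<open>\<not> super_additive n A\<close>] by blast
  obtain J where J: "J \<subseteq> {..<2 * n - 1}" "knapsack_weight (reduction_items n A) J \<le> 2 * n - 1"
    "knapsack_value (reduction_items n A) J =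
      2 * A i + 2 * A j + 2 * (A (n - 1) * int n + 1 - A (i + j))"
    using ij(1-4) by (rule reduction_violation_witness[OF n])
  obtain I where "I \<subseteq> {..<2 * n - 1}" "knapsack_weight (reduction_items n A) I \<le> 2 * n - 1"
    and opt: "?opt = knapsack_value (reduction_items n A) I"
    using knapsack_opt_attained length_reduction_items[OF n] by metis
  then have "?opt \<le> 2 * (A (n - 1) * int n + 1) + 1"
    using reduction_feasible_value_le[where n = n and A = A, OF n A0 mono] odd_opt by simp
  also have "\<dots> < knapsack_value (reduction_items n A) J"
    using J(3) ij(5) by simp
  also have "\<dots> \<le> ?opt"
    using J(1,2) length_reduction_items[OF n] by (intro knapsack_opt_ge) auto
  finally show False by simp
qed

theorem mainTheorem16:
  fixes n :: nat and A :: "nat \<Rightarrow> int"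
  assumes "n \<ge> 2"
    and "A 0 = 0"
    and "\<And>i j. i < j \<Longrightarrow> j \<le> n - 1 \<Longrightarrow> A i < A j"
    and "\<And>i. 2 * i \<le> n - 1 \<Longrightarrow> 2 * A i \<le> A (2 * i)"
  shows "odd (knapsack_opt (reduction_items n A) (2 * n - 1)) \<longleftrightarrow> super_additive n A"
proof -
  have mono: "A i \<le> A j" if "i \<le> j" "j \<le> n - 1" for i j
    using assms(3)[of i j] that by (cases "i = j") auto
  show ?thesis
    using reduction_opt_super_additive[where n = n and A = A, OF assms(1,2) mono]
      reduction_opt_not_super_additive[where n = n and A = A, OF assms(1,2) mono assms(4)]
    by (cases "super_additive n A") auto
qed

end
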